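(* The maps $\iota_{1\otimes2}:\mathcal B\to S(A^{(1)}_{1\otimes2})\otimes S(A^{(2)}_{1\otimes2})$ and $\iota_{2\otimes1}:\mathcal B\to S(A^{(2)}_{2\otimes1})\otimes S(A^{(1)}_{2\otimes1})$ are both isomorphisms of algebras with respect to the shuffle product.
   Context: Forms on $\mathbf P^1\times\mathbf P^1$ with coordinates $(z_1,z_2)$: $\zeta_i=dz_i/z_i$, $\zeta_{ii}=dz_i/(1-z_i)$ ($i=1,2$), $\zeta_{12}=d(z_1z_2)/(1-z_1z_2)$, $\zeta^{(1)}_{12}=z_2dz_1/(1-z_1z_2)$, $\zeta^{(2)}_{12}=z_1dz_2/(1-z_1z_2)$. For an alphabet $B$ of such forms, $S(B)$ is the vector space with basis the words in $B$ (empty word $\mathbf 1$), graded by length, with concatenation $\circ$, shuffle product $⧢$ (defined by $\mathbf 1⧢w=w⧢\mathbf 1=w$, $(a\circ u)⧢(b\circ v)=a\circ(u⧢(b\circ v))+b\circ((a\circ u)⧢v)$ for letters $a,b$), and deconcatenation coproduct $\Delta^*(\omega_1\circ\cdots\circ\omega_s)=\sum_{l=0}^s(\omega_1\circ\cdots\circ\omega_l)\otimes(\omega_{l+1}\circ\cdots\circ\omega_s)$; tensor products carry the componentwise shuffle product. $A=\{\zeta_1,\zeta_{11},\zeta_2,\zeta_{22},\zeta_{12}\}$, $A^{(1)}_{1\otimes2}=\{\zeta_1,\zeta_{11},\zeta^{(1)}_{12}\}$, $A^{(2)}_{1\otimes2}=\{\zeta_2,\zeta_{22}\}$, $A^{(2)}_{2\otimes1}=\{\zeta_2,\zeta_{22},\zeta^{(2)}_{12}\}$,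 $A^{(1)}_{2\otimes1}=\{\zeta_1,\zeta_{11}\}$. An element $\sum_I c_I\omega_{i_1}\circ\cdots\circ\omega_{i_s}\in S_s(A)$ satisfies Chen's integrability condition if for each $1\le l<s$, $\sum_I c_I\omega_{i_1}\otimes\cdots\otimes(\omega_{i_l}\wedge\omega_{i_{l+1}})\otimes\cdots\otimes\omega_{i_s}=0$ as a multiple differential form. The reduced bar algebra $\mathcal B=\bigoplus_s\mathcal B_s$ is the span of homogeneous elements satisfying it (a shuffle subalgebra of $S(A)$). For $\{i_1,i_2\}=\{1,2\}$: $\Pr^{(i_1)}_{i_1\otimes i_2}:S(A)\to S(A^{(i_1)}_{i_1\otimes i_2})$ replaces each letter of a word by its restriction to $dz_{i_2}=0$ ($\zeta_{i_1}\mapsto\zeta_{i_1}$, $\zeta_{i_1i_1}\mapsto\zeta_{i_1i_1}$, $\zeta_{12}\mapsto\zeta^{(i_1)}_{12}$, $\zeta_{i_2},\zeta_{i_2i_2}\mapsto0$); $\Pr^{(i_2)}_{i_1\otimes i_2}:S(A)\to S(A^{(i_2)}_{i_1\otimes i_2})$ fixes words in $\zeta_{i_2},\zeta_{i_2i_2}$ and sends every other word to $0$. Then $\iota_{i_1\otimes i_2}=(\Pr^{(i_1)}_{i_1\otimes i_2}|_{\mathcal B}\otimes\Pr^{(i_2)}_{i_1\otimes i_2}|_{\mathcal B})\circ\Delta^*$ restricted to $\mathcal B$. *)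

theory Defs
  imports Complex_Main
begin

datatype letter = Z1 | Z11 | Z2 | Z22 | Z12 | Z12_1 | Z12_2

text \<open>A 1-form f1 dz1 + f2 dz2 is represented by its coefficient pair (f1, f2),
  as functions of (z1, z2).\<close>

fun form :: "letter \<Rightarrow> (complex \<times> complex \<Rightarrow> complex) \<times> (complex \<times> complex \<Rightarrow> complex)" where
  "form Z1    = ((\<lambda>(z1, z2). 1 / z1), (\<lambda>_. 0))"
| "form Z11   = ((\<lambda>(z1, z2). 1 / (1 - z1)), (\<lambda>_. 0))"
| "form Z2    = ((\<lambda>_. 0), (\<lambda>(z1, z2). 1 / z2))"
| "form Z22   = ((\<lambda>_. 0), (\<lambda>(z1, z2). 1 / (1 - z2)))"
| "form Z12   = ((\<lambda>(z1, z2). z2 / (1 - z1 * z2)), (\<lambda>(z1, z2). z1 / (1 - z1 * z2)))"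
| "form Z12_1 = ((\<lambda>(z1, z2). z2 / (1 - z1 * z2)), (\<lambda>_. 0))"
| "form Z12_2 = ((\<lambda>_. 0), (\<lambda>(z1, z2). z1 / (1 - z1 * z2)))"

text \<open>Coefficient of dz1 /\ dz2 in the wedge product of two letters.\<close>
definition wedge :: "letter \<Rightarrow> letter \<Rightarrow> complex \<times> complex \<Rightarrow> complex" where
  "wedge a b z = fst (form a) z * snd (form b) z - snd (form a) z * fst (form b) z"

text \<open>Dense open set on which all the forms are regular; a rational 2-form vanishes
  iff its coefficient vanishes there.\<close>
definition Ureg :: "(complex \<times> complex) set" where
  "Ureg = {(z1, z2). z1 \<noteq> 0 \<and> z1 \<noteq> 1 \<and> z2 \<noteq> 0 \<and> z2 \<noteq> 1 \<and> z1 * z2 \<noteq> 1}"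

definition A :: "letter set" where "A = {Z1, Z11, Z2, Z22, Z12}"
definition A1_12 :: "letter set" where "A1_12 = {Z1, Z11, Z12_1}"
definition A2_12 :: "letter set" where "A2_12 = {Z2, Z22}"
definition A2_21 :: "letter set" where "A2_21 = {Z2, Z22, Z12_2}"
definition A1_21 :: "letter set" where "A1_21 = {Z1, Z11}"

text \<open>Elements of S(B): finitely supported rational coefficient functions on words,
  supported on words in the alphabet B.\<close>
definition supp :: "('w \<Rightarrow> rat) \<Rightarrow> 'w set" where
  "supp x = {w. x w \<noteq> 0}"

definition S :: "letter set \<Rightarrow> (letter list \<Rightarrow> rat) set" where
  "S B = {x. finite (supp x) \<and> (\<forall>w \<in> supp x. set w \<subseteq> B)}"

text \<open>Coefficient of the word w in the shuffle product u \<diamondop> v of two words.\<close>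
fun sh :: "'a list \<Rightarrow> 'a list \<Rightarrow> 'a list \<Rightarrow> rat" where
  "sh [] v w = (if w = v then 1 else 0)"
| "sh (a # u) [] w = (if w = a # u then 1 else 0)"
| "sh (a # u) (b # v) [] = 0"
| "sh (a # u) (b # v) (c # w) =
     (if c = a then sh u (b # v) w else 0) + (if c = b then sh (a # u) v w else 0)"

definition shuffle :: "(letter list \<Rightarrow> rat) \<Rightarrow> (letter list \<Rightarrow> rat) \<Rightarrow> (letter list \<Rightarrow> rat)" where
  "shuffle x y w = (\<Sum>u \<in> supp x. \<Sum>v \<in> supp y. x u * y v * sh u v w)"

definition unit_word :: "letter list \<Rightarrow> rat" where
  "unit_word w = (if w = [] then 1 else 0)"

definition T :: "letter set \<Rightarrow> letter set \<Rightarrow> (letter list \<times> letter list \<Rightarrow> rat) set" where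
  "T B1 B2 = {X. finite (supp X) \<and> (\<forall>p \<in> supp X. set (fst p) \<subseteq> B1 \<and> set (snd p) \<subseteq> B2)}"

definition tshuffle :: "(letter list \<times> letter list \<Rightarrow> rat) \<Rightarrow> (letter list \<times> letter list \<Rightarrow> rat)
    \<Rightarrow> (letter list \<times> letter list \<Rightarrow> rat)" where
  "tshuffle X Y = (\<lambda>(w1, w2). \<Sum>p \<in> supp X. \<Sum>q \<in> supp Y.
      X p * Y q * sh (fst p) (fst q) w1 * sh (snd p) (snd q) w2)"

definition unit_tensor :: "letter list \<times> letter list \<Rightarrow> rat" where
  "unit_tensor p = (if p = ([], []) then 1 else 0)"

definition hcomp :: "nat \<Rightarrow> (letter list \<Rightarrow> rat) \<Rightarrow> (letter list \<Rightarrow> rat)" where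
  "hcomp s x w = (if length w = s then x w else 0)"

text \<open>Since the letters of A are linearly independent, the multiple differential form
  sum_I c_I w_i1 (x) ... (x) (w_il /\ w_il+1) (x) ... (x) w_is vanishes iff for every fixed
  prefix u (length l-1) and suffix v (length s-l-1) the 2-form
  sum_{a,b} c_{u a b v} a /\ b vanishes.\<close>
definition chen_integrable :: "nat \<Rightarrow> (letter list \<Rightarrow> rat) \<Rightarrow> bool" where
  "chen_integrable s x \<longleftrightarrow>
     (\<forall>l. 1 \<le> l \<and> l < s \<longrightarrow>
       (\<forall>u v. length u = l - 1 \<and> length v = s - l - 1 \<longrightarrow>
         (\<forall>z \<in> Ureg. (\<Sum>a \<in> A. \<Sum>b \<in> A. of_rat (x (u @ [a, b] @ v)) * wedge a b z) = 0)))"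

definition Bs :: "nat \<Rightarrow> (letter list \<Rightarrow> rat) set" where
  "Bs s = {x \<in> S A. (\<forall>w \<in> supp x. length w = s) \<and> chen_integrable s x}"

definition Bar :: "(letter list \<Rightarrow> rat) set" where
  "Bar = {x \<in> S A. \<forall>s. hcomp s x \<in> Bs s}"

text \<open>Restriction of letters to dz2 = 0 (case 1 (x) 2) and to dz1 = 0 (case 2 (x) 1);
  None means the restriction is 0.\<close>
fun restr12 :: "letter \<Rightarrow> letter option" where
  "restr12 Z1 = Some Z1" | "restr12 Z11 = Some Z11" | "restr12 Z12 = Some Z12_1"
| "restr12 Z2 = None" | "restr12 Z22 = None" | "restr12 Z12_1 = None" | "restr12 Z12_2 = None"

fun restr21 :: "letter \<Rightarrow> letter option" where
  "restr21 Z2 = Some Z2" | "restr21 Z22 = Some Z22" | "restr21 Z12 = Some Z12_2"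
| "restr21 Z1 = None" | "restr21 Z11 = None" | "restr21 Z12_1 = None" | "restr21 Z12_2 = None"

text \<open>Pr^(i1) on words: letterwise restriction (None = the zero element).\<close>
definition pr_first :: "(letter \<Rightarrow> letter option) \<Rightarrow> letter list \<Rightarrow> letter list option" where
  "pr_first r w = those (map r w)"

definition pr_second :: "letter set \<Rightarrow> letter list \<Rightarrow> letter list option" where
  "pr_second K w = (if set w \<subseteq> K then Some w else None)"

text \<open>(Pr^(i1) (x) Pr^(i2)) o Delta^*, extended linearly.\<close>
definition iota :: "(letter \<Rightarrow> letter option) \<Rightarrow> letter set \<Rightarrow> (letter list \<Rightarrow> rat)
    \<Rightarrow> (letter list \<times> letter list \<Rightarrow> rat)" where
  "iota r K x = (\<lambda>(u, v). \<Sum>w \<in> supp x. \<Sum>l \<in> {0..length w}.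
      (if pr_first r (take l w) = Some u \<and> pr_second K (drop l w) = Some v then x w else 0))"

definition iota12 where "iota12 = iota restr12 A2_12"
definition iota21 where "iota21 = iota restr21 A1_21"

definition shuffle_alg_iso :: "((letter list \<Rightarrow> rat) \<Rightarrow> (letter list \<times> letter list \<Rightarrow> rat))
    \<Rightarrow> letter set \<Rightarrow> letter set \<Rightarrow> bool" where
  "shuffle_alg_iso f B1 B2 \<longleftrightarrow>
     bij_betw f Bar (T B1 B2) \<and>
     (\<forall>x \<in> Bar. \<forall>y \<in> Bar. f (\<lambda>w. x w + y w) = (\<lambda>p. f x p + f y p)) \<and>
     (\<forall>c. \<forall>x \<in> Bar. f (\<lambda>w. c * x w) = (\<lambda>p. c * f x p)) \<and>
     (\<forall>x \<in> Bar. \<forall>y \<in> Bar. f (shuffle x y) = tshuffle (f x) (f y)) \<and>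
     f unit_word = unit_tensor"

end

theory Submission
  imports Defs
begin

text \<open>Letters of \<open>A\<close> split into the letters \<open>F\<close> that survive the restriction and the
  letters \<open>K\<close> of the second tensor factor. Since the nonzero wedge products of the letters
  satisfy only two linear relations, Chen's condition at a pair of adjacent positions is
  equivalent to a straightening law: the coefficient of a word containing \<open>b a\<close> with
  \<open>b \<in> K\<close>, \<open>a \<in> F\<close> is a fixed rational combination of coefficients of words in which
  that pair starts with a letter of \<open>F\<close>. These replacements decrease a weight, so an
  integrable element is determined by its coefficients at normal words (letters of \<open>F\<close>
  followed by letters of \<open>K\<close>), which are exactly what \<open>\<iota>\<close> records; conversely, any
  choice of those coefficients extends by straightening, consistently because replacements
  at disjoint positions commute. Compatibility with shuffles holds because a shuffle of two
  words is normal only as the shuffle of their \<open>F\<close>-prefixes followed by the shuffle of their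
  remainders.\<close>

lemma sh_Nil_right: "sh u [] w = (if w = u then 1 else 0)"
  by (cases u) auto

lemma sh_Nil_word: "sh u v [] = (if u = [] \<and> v = [] then 1 else 0)"
  by (cases u; cases v) auto

lemma sh_Cons_word: "sh u v (c # w) =
   (case u of [] \<Rightarrow> 0 | a # u' \<Rightarrow> if a = c then sh u' v w else 0) +
   (case v of [] \<Rightarrow> 0 | b # v' \<Rightarrow> if b = c then sh u v' w else 0)"
  by (cases u; cases v) (auto simp: sh_Nil_right)

lemma sh_nonzero_imp: "sh u v w \<noteq> 0 \<Longrightarrow> length w = length u + length v \<and> set w = set u \<union> set v"
proof (induction u v w rule: sh.induct)
  case (4 a u b v c w)
  show ?case
  proof (cases "c = a \<and> sh u (b # v) w \<noteq> 0")
    case True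
    then show ?thesis using "4.IH"(1) by auto
  next
    case False
    then have "c = b \<and> sh (a # u) v w \<noteq> 0" using "4.prems" by (auto split: if_splits)
    then show ?thesis using "4.IH"(2) by auto
  qed
qed (auto split: if_splits)

lemma sh_eq_0_if_not_subset: "\<not> set w \<subseteq> B \<Longrightarrow> set u \<subseteq> B \<Longrightarrow> set v \<subseteq> B \<Longrightarrow> sh u v w = 0"
  using sh_nonzero_imp by blast

lemma sh_map: "inj_on f (set u \<union> set v \<union> set w) \<Longrightarrow> sh (map f u) (map f v) (map f w) = sh u v w"
proof (induction u v w rule: sh.induct)
  case (1 v w)
  then have "map f w = map f v \<longleftrightarrow> w = v" by (intro inj_on_map_eq_map) (auto intro: inj_on_subset)
  then show ?case by simp
next
  case (2 a u w)
  then have "map f w = map f (a # u) \<longleftrightarrow> w = a # u"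
    by (intro inj_on_map_eq_map) (auto intro: inj_on_subset)
  then show ?case by simp
next
  case (4 a u b v c w)
  have "(f c = f a) = (c = a)" "(f c = f b) = (c = b)"
    using "4.prems" by (auto dest: inj_onD)
  moreover have "inj_on f (set u \<union> set (b # v) \<union> set w)" "inj_on f (set (a # u) \<union> set v \<union> set w)"
    using "4.prems" by (auto intro: inj_on_subset)
  ultimately show ?case using "4.IH" by simp
qed simp

lemma sh_append_split:
  assumes "set U \<subseteq> F" "set V \<subseteq> K" "F \<inter> K = {}"
  shows "sh w1 w2 (U @ V) =
    (if set (dropWhile (\<lambda>x. x \<in> F) w1) \<subseteq> K \<and> set (dropWhile (\<lambda>x. x \<in> F) w2) \<subseteq> K
     then sh (takeWhile (\<lambda>x. x \<in> F) w1) (takeWhile (\<lambda>x. x \<in> F) w2) U *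
          sh (dropWhile (\<lambda>x. x \<in> F) w1) (dropWhile (\<lambda>x. x \<in> F) w2) V else 0)"
  using assms(1)
proof (induction U arbitrary: w1 w2)
  case Nil
  let ?T = "takeWhile (\<lambda>x. x \<in> F)" and ?D = "dropWhile (\<lambda>x. x \<in> F)"
  show ?case
  proof (cases "sh w1 w2 V = 0")
    case True
    show ?thesis
    proof (cases "?T w1 = [] \<and> ?T w2 = []")
      case True
      then have "?D w1 = w1" "?D w2 = w2"
        by (metis append_Nil takeWhile_dropWhile_id)+
      then show ?thesis using True \<open>sh w1 w2 V = 0\<close> by (simp add: sh_Nil_word)
    qed (use True in \<open>auto simp: sh_Nil_word\<close>)
  next
    case False
    then have "set w1 \<subseteq> K" "set w2 \<subseteq> K"
      using sh_nonzero_imp assms(2) by blast+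
    then have "?T w1 = []" "?T w2 = []" "?D w1 = w1" "?D w2 = w2"
      using assms(3) by (auto simp: takeWhile_eq_Nil_iff dropWhile_eq_self_iff neq_Nil_conv disjoint_iff)
    then show ?thesis using \<open>set w1 \<subseteq> K\<close> \<open>set w2 \<subseteq> K\<close> by (simp add: sh_Nil_word)
  qed
next
  case (Cons c U)
  then have "c \<in> F" "set U \<subseteq> F" by auto
  note IH = Cons.IH[OF \<open>set U \<subseteq> F\<close>]
  let ?P = "\<lambda>w. set (dropWhile (\<lambda>x. x \<in> F) w) \<subseteq> K"
  let ?T = "takeWhile (\<lambda>x. x \<in> F)" and ?D = "dropWhile (\<lambda>x. x \<in> F)"
  have left: "(case w1 of [] \<Rightarrow> 0 | d # a' \<Rightarrow> if d = c then sh a' w2 (U @ V) else 0) =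
    (if ?P w1 \<and> ?P w2 then (case ?T w1 of [] \<Rightarrow> 0 | d # a' \<Rightarrow> if d = c then sh a' (?T w2) U else 0)
       * sh (?D w1) (?D w2) V else 0)"
    using \<open>c \<in> F\<close> IH by (cases w1) auto
  have right: "(case w2 of [] \<Rightarrow> 0 | d # b' \<Rightarrow> if d = c then sh w1 b' (U @ V) else 0) =
    (if ?P w1 \<and> ?P w2 then (case ?T w2 of [] \<Rightarrow> 0 | d # b' \<Rightarrow> if d = c then sh (?T w1) b' U else 0)
       * sh (?D w1) (?D w2) V else 0)"
    using \<open>c \<in> F\<close> IH by (cases w2) auto
  show ?case
    unfolding append_Cons sh_Cons_word[of w1 w2] sh_Cons_word[of "?T w1" "?T w2"] left right
    by (simp add: algebra_simps)
qed

lemma supp_add_subset: "supp (\<lambda>w. x w + y w) \<subseteq> supp x \<union> supp y"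
  by (auto simp: supp_def)

lemma supp_scale_subset: "supp (\<lambda>w. c * x w) \<subseteq> supp x"
  by (auto simp: supp_def)

lemma finite_supp_Bar: "x \<in> Bar \<Longrightarrow> finite (supp x)"
  by (simp add: Bar_def S_def)

lemma shuffle_in_S:
  assumes "finite B" "x \<in> S B" "y \<in> S B"
  shows "shuffle x y \<in> S B"
proof -
  have "supp (shuffle x y) \<subseteq> (\<Union>u\<in>supp x. \<Union>v\<in>supp y. {w. set w \<subseteq> B \<and> length w = length u + length v})"
  proof
    fix w assume "w \<in> supp (shuffle x y)"
    then obtain u v where "u \<in> supp x" "v \<in> supp y" "sh u v w \<noteq> 0"
      unfolding supp_def shuffle_def by (auto elim!: sum.not_neutral_contains_not_neutral)
    then show "w \<in> (\<Union>u\<in>supp x. \<Union>v\<in>supp y. {w. set w \<subseteq> B \<and> length w = length u + length v})"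
      using sh_nonzero_imp assms(2,3) by (fastforce simp: S_def)
  qed
  moreover have "finite (\<Union>u\<in>supp x. \<Union>v\<in>supp y. {w. set w \<subseteq> B \<and> length w = length u + length v})"
    using assms by (auto simp: S_def intro: finite_lists_length_eq)
  ultimately show ?thesis
    unfolding S_def by (auto intro: finite_subset)
qed

section \<open>Chen's condition at one pair of positions\<close>

definition chen_coeff :: "(letter \<Rightarrow> letter \<Rightarrow> rat) \<Rightarrow> complex \<times> complex \<Rightarrow> complex" where
  "chen_coeff c z = (\<Sum>a\<in>A. \<Sum>b\<in>A. of_rat (c a b) * wedge a b z)"

definition skew :: "(letter \<Rightarrow> letter \<Rightarrow> 'a::ab_group_add) \<Rightarrow> letter \<Rightarrow> letter \<Rightarrow> 'a" where
  "skew c a b = c a b - c b a"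

text \<open>On \<open>Ureg\<close> the eight nonzero wedge products satisfy \<open>wedge Z1 Z12 = wedge Z12 Z2\<close> and
  \<open>wedge Z11 Z22 = wedge Z11 Z12 + wedge Z12 Z22 + wedge Z1 Z12\<close>; eliminating these leaves
  six linearly independent functions.\<close>
definition chen_reduced :: "(letter \<Rightarrow> letter \<Rightarrow> rat) \<Rightarrow> 'a \<Rightarrow> 'a \<Rightarrow> 'a::field_char_0" where
  "chen_reduced c z1 z2 =
      of_rat (skew c Z1 Z2) / (z1 * z2) + of_rat (skew c Z1 Z22) / (z1 * (1 - z2))
    + of_rat (skew c Z11 Z2) / ((1 - z1) * z2)
    + of_rat (skew c Z1 Z12 + skew c Z12 Z2 + skew c Z11 Z22) / (1 - z1 * z2)
    + of_rat (skew c Z11 Z12 + skew c Z11 Z22) * z1 / ((1 - z1) * (1 - z1 * z2))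
    + of_rat (skew c Z12 Z22 + skew c Z11 Z22) * z2 / ((1 - z2) * (1 - z1 * z2))"

lemma sum_A: "(\<Sum>a\<in>A. f a) = f Z1 + f Z11 + f Z2 + f Z22 + f Z12"
  by (simp add: A_def add.assoc)

lemma chen_coeff_eq_reduced:
  assumes "(z1, z2) \<in> Ureg"
  shows "chen_coeff c (z1, z2) = chen_reduced c z1 z2"
proof -
  have "z1 \<noteq> 0" "1 - z1 \<noteq> 0" "z2 \<noteq> 0" "1 - z2 \<noteq> 0" "1 - z1 * z2 \<noteq> 0"
    using assms by (auto simp: Ureg_def)
  then have "inverse z1 * z1 = 1" "inverse (1 - z1) * (1 - z1) = 1" "inverse z2 * z2 = 1"
    "inverse (1 - z2) * (1 - z2) = 1" "inverse (1 - z1 * z2) * (1 - z1 * z2) = 1"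
    by simp_all
  then show ?thesis
    unfolding chen_coeff_def chen_reduced_def sum_A wedge_def skew_def of_rat_add of_rat_diff
    by (simp add: divide_inverse) algebra
qed

lemma chen_reduced_of_rat:
  "chen_reduced c (of_rat p) (of_rat q) = (of_rat (chen_reduced c p q) :: 'a::field_char_0)"
  by (simp add: chen_reduced_def of_rat_add of_rat_mult of_rat_divide of_rat_diff)

lemma chen_coeff_vanishes_iff:
  "(\<forall>z\<in>Ureg. chen_coeff c z = 0) \<longleftrightarrow>
     skew c Z1 Z2 = 0 \<and> skew c Z1 Z22 = 0 \<and> skew c Z11 Z2 = 0 \<and>
     skew c Z1 Z12 + skew c Z12 Z2 + skew c Z11 Z22 = 0 \<and>
     skew c Z11 Z12 + skew c Z11 Z22 = 0 \<and> skew c Z12 Z22 + skew c Z11 Z22 = 0"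
proof
  assume vanish: "\<forall>z\<in>Ureg. chen_coeff c z = 0"
  have "chen_reduced c p q = (0::rat)"
    if "p \<noteq> 0" "p \<noteq> 1" "q \<noteq> 0" "q \<noteq> 1" "p * q \<noteq> 1" for p q
  proof -
    have "(of_rat p :: complex, of_rat q) \<in> Ureg"
      using that by (simp add: Ureg_def of_rat_eq_1_iff flip: of_rat_mult)
    then show ?thesis
      using vanish chen_coeff_eq_reduced chen_reduced_of_rat by (metis of_rat_eq_0_iff)
  qed
  \<comment> \<open>the six functions evaluated at these six points form a nonsingular matrix\<close>
  from this[of 2 3] this[of 3 2] this[of "-1" 2] this[of 2 "-1"] this[of "-1" 3] this[of "-2" "-2"]
  show "skew c Z1 Z2 = 0 \<and> skew c Z1 Z22 = 0 \<and> skew c Z11 Z2 = 0 \<and>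
     skew c Z1 Z12 + skew c Z12 Z2 + skew c Z11 Z22 = 0 \<and>
     skew c Z11 Z12 + skew c Z11 Z22 = 0 \<and> skew c Z12 Z22 + skew c Z11 Z22 = 0"
    unfolding chen_reduced_def by (simp add: add_divide_distrib diff_divide_distrib)
qed (auto simp: chen_coeff_eq_reduced chen_reduced_def)

definition lincomb :: "(rat \<times> 'a \<times> 'a) list \<Rightarrow> ('a \<Rightarrow> 'a \<Rightarrow> rat) \<Rightarrow> rat" where
  "lincomb ts c = (\<Sum>(q, a, b)\<leftarrow>ts. q * c a b)"

lemma lincomb_cong [fundef_cong]:
  "ts = ts' \<Longrightarrow> (\<And>q a b. (q, a, b) \<in> set ts' \<Longrightarrow> c a b = c' a b) \<Longrightarrow> lincomb ts c = lincomb ts' c'"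
  unfolding lincomb_def by (intro arg_cong[where f = sum_list] map_cong) auto

lemma lincomb_Cons [simp]: "lincomb ((q, a, b) # ts) c = q * c a b + lincomb ts c"
  by (simp add: lincomb_def)

lemma lincomb_Nil [simp]: "lincomb [] c = 0"
  by (simp add: lincomb_def)

lemma lincomb_add: "lincomb ts (\<lambda>a b. c a b + d a b) = lincomb ts c + lincomb ts d"
  by (induction ts) (auto simp: algebra_simps)

lemma lincomb_scale: "lincomb ts (\<lambda>a b. q * c a b) = q * lincomb ts c"
  by (induction ts) (auto simp: algebra_simps)

lemma lincomb_zero [simp]: "lincomb ts (\<lambda>_ _. 0) = 0"
  by (induction ts) auto

lemma lincomb_swap:
  "lincomb ts (\<lambda>a b. lincomb ss (f a b)) = lincomb ss (\<lambda>c d. lincomb ts (\<lambda>a b. f a b c d))"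
  by (induction ts) (auto simp: lincomb_add lincomb_scale)

definition replace_pair :: "'a list \<Rightarrow> nat \<Rightarrow> 'a \<Rightarrow> 'a \<Rightarrow> 'a list" where
  "replace_pair w i a b = w[i := a, Suc i := b]"

lemma length_replace_pair [simp]: "length (replace_pair w i a b) = length w"
  by (simp add: replace_pair_def)

lemma nth_replace_pair:
  "k < length w \<Longrightarrow> replace_pair w i a b ! k = (if k = Suc i then b else if k = i then a else w ! k)"
  by (simp add: replace_pair_def nth_list_update)

lemma replace_pair_middle: "replace_pair (u @ a # b # v) (length u) c d = u @ c # d # v"
  by (simp add: replace_pair_def list_update_append)

lemma replace_pair_commute:
  "Suc i < j \<Longrightarrow> replace_pair (replace_pair w i a b) j c d = replace_pair (replace_pair w j c d) i a b"
  by (rule nth_equalityI) (auto simp: nth_replace_pair)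

lemma decompose_at_pair:
  "Suc i < length w \<Longrightarrow> w = take i w @ w ! i # w ! Suc i # drop (Suc (Suc i)) w"
  by (simp add: Cons_nth_drop_Suc)

lemma set_replace_pair_subset_iff:
  assumes "Suc i < length w" "w ! i \<in> B" "w ! Suc i \<in> B" "a \<in> B" "b \<in> B"
  shows "set (replace_pair w i a b) \<subseteq> B \<longleftrightarrow> set w \<subseteq> B"
proof -
  let ?u = "take i w" and ?v = "drop (Suc (Suc i)) w"
  have "set w = set (?u @ w ! i # w ! Suc i # ?v)"
    by (rule arg_cong[where f = set]) (rule decompose_at_pair[OF assms(1)])
  moreover have "replace_pair w i a b = ?u @ a # b # ?v"
    using replace_pair_middle[of ?u "w ! i" "w ! Suc i" ?v a b] decompose_at_pair[OF assms(1)] assms(1)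
    by simp
  ultimately show ?thesis
    using assms(2-5) by auto
qed

section \<open>Straightening laws\<close>

text \<open>\<open>r\<close> is the letterwise restriction, defined exactly on \<open>F\<close>, with image alphabet \<open>B1\<close>;
  \<open>K\<close> is the alphabet of the second factor. \<open>rule b a\<close> lists the straightening relation
  \<open>c b a = \<Sum> q * c a' b'\<close>, and the last assumption says that Chen's condition for the
  coefficients \<open>c\<close> of one pair of positions is equivalent to these relations.\<close>
locale straightening_law =
  fixes r :: "letter \<Rightarrow> letter option" and F K B1 :: "letter set"
    and rule :: "letter \<Rightarrow> letter \<Rightarrow> (rat \<times> letter \<times> letter) list"
  assumes A_split: "A = F \<union> K" and F_K_disjoint: "F \<inter> K = {}"
    and r_defined_iff: "\<And>a. r a \<noteq> None \<longleftrightarrow> a \<in> F"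
    and r_inj: "\<And>a b c. r a = Some c \<Longrightarrow> r b = Some c \<Longrightarrow> a = b"
    and r_image: "r ` F = Some ` B1"
    and rule_letters: "\<And>b a q a' b'. b \<in> K \<Longrightarrow> a \<in> F \<Longrightarrow> (q, a', b') \<in> set (rule b a) \<Longrightarrow> a' \<in> F \<and> b' \<in> A"
    and chen_iff_straightening:
      "\<And>c. (\<forall>z\<in>Ureg. chen_coeff c z = 0) \<longleftrightarrow> (\<forall>b\<in>K. \<forall>a\<in>F. c b a = lincomb (rule b a) c)"
begin

definition restr_letter :: "letter \<Rightarrow> letter" where
  "restr_letter a = the (r a)"

definition lift_word :: "letter list \<Rightarrow> letter list" where
  "lift_word u = map (inv_into F restr_letter) u"

abbreviation F_prefix :: "letter list \<Rightarrow> letter list" where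
  "F_prefix \<equiv> takeWhile (\<lambda>a. a \<in> F)"

abbreviation F_rest :: "letter list \<Rightarrow> letter list" where
  "F_rest \<equiv> dropWhile (\<lambda>a. a \<in> F)"

definition split_word :: "letter list \<Rightarrow> letter list \<times> letter list" where
  "split_word w = (map restr_letter (F_prefix w), F_rest w)"

lemma r_restr_letter: "a \<in> F \<Longrightarrow> r a = Some (restr_letter a)"
  using r_defined_iff[of a] by (auto simp: restr_letter_def)

lemma bij_betw_restr_letter: "bij_betw restr_letter F B1"
proof (rule bij_betw_imageI)
  show "inj_on restr_letter F"
    by (rule inj_onI) (metis r_inj r_restr_letter)
  have "restr_letter ` F = the ` r ` F"
    by (auto simp: restr_letter_def)
  then show "restr_letter ` F = B1"
    by (simp add: r_image image_image)
qed

lemma pr_first_eq: "pr_first r w = (if set w \<subseteq> F then Some (map restr_letter w) else None)"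
  unfolding pr_first_def
proof (induction w)
  case (Cons a w)
  then show ?case
    using r_restr_letter r_defined_iff[of a] by (auto split: option.split)
qed simp

lemma lift_word_in_F: "set u \<subseteq> B1 \<Longrightarrow> set (lift_word u) \<subseteq> F"
  using bij_betw_restr_letter by (auto simp: lift_word_def bij_betw_def inv_into_into)

lemma restr_lift_word: "set u \<subseteq> B1 \<Longrightarrow> map restr_letter (lift_word u) = u"
  using bij_betw_restr_letter by (induction u) (auto simp: lift_word_def bij_betw_def f_inv_into_f)

lemma lift_restr_word: "set w \<subseteq> F \<Longrightarrow> lift_word (map restr_letter w) = w"
  using bij_betw_restr_letter by (induction w) (auto simp: lift_word_def bij_betw_def)

lemma length_lift_word [simp]: "length (lift_word u) = length u"
  by (simp add: lift_word_def)

lemma restr_word_in_B1: "set w \<subseteq> F \<Longrightarrow> set (map restr_letter w) \<subseteq> B1"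
  using bij_betw_restr_letter by (auto simp: bij_betw_def)

lemma F_prefix_in_F: "set (F_prefix w) \<subseteq> F"
  by (induction w) auto

lemma F_prefix_append: "set U \<subseteq> F \<Longrightarrow> set V \<subseteq> K \<Longrightarrow> F_prefix (U @ V) = U"
  using F_K_disjoint by (subst takeWhile_append2) (auto simp: takeWhile_eq_Nil_iff neq_Nil_conv disjoint_iff)

lemma F_rest_append: "set U \<subseteq> F \<Longrightarrow> set V \<subseteq> K \<Longrightarrow> F_rest (U @ V) = V"
  using F_K_disjoint by (subst dropWhile_append2) (auto simp: dropWhile_eq_self_iff neq_Nil_conv disjoint_iff)

lemma split_word_lift_append: "set u \<subseteq> B1 \<Longrightarrow> set v \<subseteq> K \<Longrightarrow> split_word (lift_word u @ v) = (u, v)"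
  by (simp add: split_word_def F_prefix_append F_rest_append lift_word_in_F restr_lift_word)

lemma lift_append_split_word: "lift_word (fst (split_word w)) @ snd (split_word w) = w"
  by (simp add: split_word_def lift_restr_word F_prefix_in_F)

lemma inj_split_word: "inj split_word"
  by (metis injI lift_append_split_word)

lemma split_word_in_alphabets:
  "set (F_rest w) \<subseteq> K \<Longrightarrow> set (fst (split_word w)) \<subseteq> B1 \<and> set (snd (split_word w)) \<subseteq> K"
  using restr_word_in_B1[OF F_prefix_in_F] by (simp add: split_word_def)

lemma pr_split_eq_Some_iff:
  assumes "l \<le> length w"
  shows "pr_first r (take l w) = Some u \<and> pr_second K (drop l w) = Some v \<longleftrightarrow>
    set u \<subseteq> B1 \<and> set v \<subseteq> K \<and> w = lift_word u @ v \<and> l = length u"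
proof
  assume "pr_first r (take l w) = Some u \<and> pr_second K (drop l w) = Some v"
  then have "set (take l w) \<subseteq> F" "u = map restr_letter (take l w)" "set v \<subseteq> K" "v = drop l w"
    by (auto simp: pr_first_eq pr_second_def split: if_splits)
  then show "set u \<subseteq> B1 \<and> set v \<subseteq> K \<and> w = lift_word u @ v \<and> l = length u"
    using assms restr_word_in_B1 lift_restr_word by fastforce
next
  assume "set u \<subseteq> B1 \<and> set v \<subseteq> K \<and> w = lift_word u @ v \<and> l = length u"
  then show "pr_first r (take l w) = Some u \<and> pr_second K (drop l w) = Some v"
    by (simp add: pr_first_eq pr_second_def lift_word_in_F restr_lift_word)
qed

lemma iota_apply:
  assumes "finite (supp x)"
  shows "iota r K x (u, v) = (if set u \<subseteq> B1 \<and> set v \<subseteq> K then x (lift_word u @ v) else 0)"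
proof -
  let ?Q = "set u \<subseteq> B1 \<and> set v \<subseteq> K"
  have "iota r K x (u, v) =
      (\<Sum>w\<in>supp x. \<Sum>l\<in>{0..length w}. if ?Q \<and> w = lift_word u @ v \<and> l = length u then x w else 0)"
    unfolding iota_def prod.case by (intro sum.cong refl) (simp add: pr_split_eq_Some_iff conj_assoc)
  also have "\<dots> = (\<Sum>w\<in>supp x. \<Sum>l\<in>{0..length w}.
      if l = length u then (if ?Q \<and> w = lift_word u @ v then x w else 0) else 0)"
    by (intro sum.cong refl) auto
  also have "\<dots> = (\<Sum>w\<in>supp x. if ?Q \<and> w = lift_word u @ v then x w else 0)"
    by (intro sum.cong refl) (auto simp: sum.delta)
  also have "\<dots> = (if ?Q then x (lift_word u @ v) else 0)"
    using assms by (cases "set u \<subseteq> B1"; cases "set v \<subseteq> K") (simp_all add: supp_def sum.delta')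
  finally show ?thesis .
qed

lemma iota_add:
  assumes "finite (supp x)" "finite (supp y)"
  shows "iota r K (\<lambda>w. x w + y w) = (\<lambda>p. iota r K x p + iota r K y p)"
proof -
  have "finite (supp (\<lambda>w. x w + y w))"
    using assms by (intro finite_subset[OF supp_add_subset]) simp
  then show ?thesis
    using assms by (auto simp: iota_apply)
qed

lemma iota_scale:
  assumes "finite (supp x)"
  shows "iota r K (\<lambda>w. c * x w) = (\<lambda>p. c * iota r K x p)"
proof -
  have "finite (supp (\<lambda>w. c * x w))"
    using assms by (intro finite_subset[OF supp_scale_subset])
  then show ?thesis
    using assms by (auto simp: iota_apply)
qed

lemma iota_unit_word: "iota r K unit_word = unit_tensor"
proof -
  have "supp unit_word \<subseteq> {[]}"
    by (auto simp: supp_def unit_word_def)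
  then have "finite (supp unit_word)"
    by (rule finite_subset) simp
  then show ?thesis
    by (auto simp: iota_apply unit_word_def unit_tensor_def lift_word_def)
qed

lemma iota_split_word:
  "finite (supp x) \<Longrightarrow> set (F_rest w) \<subseteq> K \<Longrightarrow> iota r K x (split_word w) = x w"
  using iota_apply[of x "fst (split_word w)" "snd (split_word w)"] split_word_in_alphabets[of w]
  by (simp add: lift_append_split_word)

lemma supp_iota:
  assumes "finite (supp x)"
  shows "supp (iota r K x) = split_word ` {w \<in> supp x. set (F_rest w) \<subseteq> K}"
proof
  show "supp (iota r K x) \<subseteq> split_word ` {w \<in> supp x. set (F_rest w) \<subseteq> K}"
  proof
    fix p assume "p \<in> supp (iota r K x)"
    moreover obtain u v where p: "p = (u, v)" by fastforce
    ultimately have "set u \<subseteq> B1" "set v \<subseteq> K" "x (lift_word u @ v) \<noteq> 0"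
      using iota_apply[OF assms, of u v] by (auto simp: supp_def split: if_splits)
    then show "p \<in> split_word ` {w \<in> supp x. set (F_rest w) \<subseteq> K}"
      using p by (auto simp: supp_def F_rest_append lift_word_in_F split_word_lift_append
          intro!: image_eqI[of _ _ "lift_word u @ v"])
  qed
  show "split_word ` {w \<in> supp x. set (F_rest w) \<subseteq> K} \<subseteq> supp (iota r K x)"
    using iota_split_word[OF assms] by (auto simp: supp_def)
qed

lemma iota_in_T: "finite (supp x) \<Longrightarrow> iota r K x \<in> T B1 K"
  using supp_iota split_word_in_alphabets unfolding T_def by auto

lemma tshuffle_iota_apply:
  assumes "finite (supp x)" "finite (supp y)"
  shows "tshuffle (iota r K x) (iota r K y) (u, v) =
    (\<Sum>w1\<in>{w \<in> supp x. set (F_rest w) \<subseteq> K}. \<Sum>w2\<in>{w \<in> supp y. set (F_rest w) \<subseteq> K}.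
       x w1 * y w2 * sh (fst (split_word w1)) (fst (split_word w2)) u
         * sh (snd (split_word w1)) (snd (split_word w2)) v)"
  unfolding tshuffle_def supp_iota[OF assms(1)] supp_iota[OF assms(2)] prod.case
  by (simp add: sum.reindex[OF inj_on_subset[OF inj_split_word]] iota_split_word assms)

lemma sh_lift_append:
  assumes "set u \<subseteq> B1" "set v \<subseteq> K"
  shows "sh w1 w2 (lift_word u @ v) =
    (if set (F_rest w1) \<subseteq> K \<and> set (F_rest w2) \<subseteq> K
     then sh (fst (split_word w1)) (fst (split_word w2)) u * sh (snd (split_word w1)) (snd (split_word w2)) v
     else 0)"
proof -
  have "inj_on restr_letter (set (F_prefix w1) \<union> set (F_prefix w2) \<union> set (lift_word u))"
    using bij_betw_restr_letter F_prefix_in_F lift_word_in_F[OF assms(1)]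
    by (auto simp: bij_betw_def intro: inj_on_subset)
  then have "sh (fst (split_word w1)) (fst (split_word w2)) u = sh (F_prefix w1) (F_prefix w2) (lift_word u)"
    using sh_map restr_lift_word[OF assms(1)] by (metis split_word_def fst_conv)
  then show ?thesis
    using sh_append_split[OF lift_word_in_F[OF assms(1)] assms(2) F_K_disjoint]
    by (simp add: split_word_def)
qed

lemma iota_shuffle:
  assumes "finite (supp x)" "finite (supp y)" "finite (supp (shuffle x y))"
  shows "iota r K (shuffle x y) = tshuffle (iota r K x) (iota r K y)"
proof (rule ext, clarify)
  fix u v
  let ?S1 = "{w \<in> supp x. set (F_rest w) \<subseteq> K}" and ?S2 = "{w \<in> supp y. set (F_rest w) \<subseteq> K}"
  show "iota r K (shuffle x y) (u, v) = tshuffle (iota r K x) (iota r K y) (u, v)"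
  proof (cases "set u \<subseteq> B1 \<and> set v \<subseteq> K")
    case True
    have "iota r K (shuffle x y) (u, v) = (\<Sum>w1\<in>supp x. \<Sum>w2\<in>supp y. x w1 * y w2 * sh w1 w2 (lift_word u @ v))"
      using True by (simp add: iota_apply[OF assms(3)] shuffle_def)
    also have "\<dots> = (\<Sum>w1\<in>supp x. \<Sum>w2\<in>supp y. x w1 * y w2 *
        (if set (F_rest w1) \<subseteq> K \<and> set (F_rest w2) \<subseteq> K
         then sh (fst (split_word w1)) (fst (split_word w2)) u * sh (snd (split_word w1)) (snd (split_word w2)) v
         else 0))"
      using True by (simp add: sh_lift_append)
    also have "\<dots> = (\<Sum>w1\<in>?S1. \<Sum>w2\<in>?S2. x w1 * y w2 * sh (fst (split_word w1)) (fst (split_word w2)) u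
         * sh (snd (split_word w1)) (snd (split_word w2)) v)"
      unfolding sum.inter_filter[OF assms(1)] sum.inter_filter[OF assms(2)]
      by (intro sum.cong refl) (auto intro!: sum.cong)
    finally show ?thesis
      using tshuffle_iota_apply[OF assms(1,2)] by simp
  next
    case False
    have "sh (fst (split_word w1)) (fst (split_word w2)) u * sh (snd (split_word w1)) (snd (split_word w2)) v = 0"
      if "w1 \<in> ?S1" "w2 \<in> ?S2" for w1 w2
      using False that split_word_in_alphabets sh_eq_0_if_not_subset by (metis mult_eq_0_iff mem_Collect_eq)
    then have "tshuffle (iota r K x) (iota r K y) (u, v) = 0"
      unfolding tshuffle_iota_apply[OF assms(1,2)] by (intro sum.neutral ballI) (simp add: mult.assoc)
    moreover have "iota r K (shuffle x y) (u, v) = 0"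
      by (simp only: iota_apply[OF assms(3)] if_not_P[OF False])
    ultimately show ?thesis by simp
  qed
qed

definition inversion :: "letter list \<Rightarrow> nat \<Rightarrow> bool" where
  "inversion w i \<longleftrightarrow> Suc i < length w \<and> w ! i \<in> K \<and> w ! Suc i \<in> F"

definition satisfies_straightening :: "(letter list \<Rightarrow> rat) \<Rightarrow> bool" where
  "satisfies_straightening x \<longleftrightarrow> (\<forall>w i. inversion w i \<longrightarrow>
     x w = lincomb (rule (w ! i) (w ! Suc i)) (\<lambda>a b. x (replace_pair w i a b)))"

lemma chen_integrable_iff_pairs:
  "chen_integrable s y \<longleftrightarrow>
    (\<forall>u v. length u + length v + 2 = s \<longrightarrow> (\<forall>z\<in>Ureg. chen_coeff (\<lambda>a b. y (u @ [a, b] @ v)) z = 0))"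
  unfolding chen_integrable_def chen_coeff_def
proof (intro iffI allI impI)
  fix u v :: "letter list"
  assume "\<forall>l. 1 \<le> l \<and> l < s \<longrightarrow> (\<forall>u v. length u = l - 1 \<and> length v = s - l - 1 \<longrightarrow>
    (\<forall>z\<in>Ureg. (\<Sum>a\<in>A. \<Sum>b\<in>A. of_rat (y (u @ [a, b] @ v)) * wedge a b z) = 0))"
    and "length u + length v + 2 = s"
  then show "\<forall>z\<in>Ureg. (\<Sum>a\<in>A. \<Sum>b\<in>A. of_rat (y (u @ [a, b] @ v)) * wedge a b z) = 0"
    by (auto dest!: spec[of _ "Suc (length u)"])
next
  fix l :: nat and u v :: "letter list"
  assume "\<forall>u v. length u + length v + 2 = s \<longrightarrow>
    (\<forall>z\<in>Ureg. (\<Sum>a\<in>A. \<Sum>b\<in>A. of_rat (y (u @ [a, b] @ v)) * wedge a b z) = 0)"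
    and "1 \<le> l \<and> l < s" "length u = l - 1 \<and> length v = s - l - 1"
  moreover have "length u + length v + 2 = s"
    using \<open>1 \<le> l \<and> l < s\<close> \<open>length u = l - 1 \<and> length v = s - l - 1\<close> by linarith
  ultimately show "\<forall>z\<in>Ureg. (\<Sum>a\<in>A. \<Sum>b\<in>A. of_rat (y (u @ [a, b] @ v)) * wedge a b z) = 0"
    by blast
qed

definition inversion_weight :: "letter list \<Rightarrow> nat" where
  "inversion_weight w = (\<Sum>j<length w. if w ! j \<in> K then length w - j else 0)"

lemma inversion_weight_decreases:
  assumes "inversion w i" "a \<in> F"
  shows "inversion_weight (replace_pair w i a b) < inversion_weight w"
proof -
  let ?w = "replace_pair w i a b" and ?J = "{..<length w} - {i} - {Suc i}"
  let ?t = "\<lambda>w j. if w ! j \<in> K then length w - j else 0"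
  have i: "Suc i < length w" "w ! i \<in> K" "w ! Suc i \<in> F"
    using assms(1) by (auto simp: inversion_def)
  have split: "inversion_weight v = ?t v i + (?t v (Suc i) + (\<Sum>j\<in>?J. ?t v j))" if "length v = length w" for v
    unfolding inversion_weight_def using i(1) that by (simp add: sum.remove[of _ i] sum.remove[of _ "Suc i"])
  have "(\<Sum>j\<in>?J. ?t ?w j) = (\<Sum>j\<in>?J. ?t w j)"
    by (intro sum.cong refl) (auto simp: nth_replace_pair)
  moreover have "?t ?w i = 0" "?t ?w (Suc i) < length w - i" "?t w i = length w - i" "?t w (Suc i) = 0"
    using assms(2) i F_K_disjoint by (auto simp: nth_replace_pair)
  ultimately show ?thesis
    using split[of ?w, OF length_replace_pair] split[OF refl] by linarith
qed

lemma inversion_replace_pair_disjoint: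
  "inversion w j \<Longrightarrow> Suc i < j \<or> Suc j < i \<Longrightarrow> inversion (replace_pair w i a b) j"
  by (auto simp: inversion_def nth_replace_pair)

lemma inversion_middle: "b \<in> K \<Longrightarrow> a \<in> F \<Longrightarrow> inversion (u @ b # a # v) (length u)"
  by (simp add: inversion_def nth_append)

lemma straightening_at_pairs_iff:
  "(\<forall>u v. length u + length v + 2 = s \<longrightarrow>
      (\<forall>b\<in>K. \<forall>a\<in>F. x (u @ b # a # v) = lincomb (rule b a) (\<lambda>a' b'. x (u @ a' # b' # v)))) \<longleftrightarrow>
   (\<forall>w i. length w = s \<longrightarrow> inversion w i \<longrightarrow>
      x w = lincomb (rule (w ! i) (w ! Suc i)) (\<lambda>a b. x (replace_pair w i a b)))"
(is "?pairs \<longleftrightarrow> ?words")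
proof
  assume ?pairs
  show ?words
  proof (intro allI impI)
    fix w i assume "length w = s" "inversion w i"
    then have i: "Suc i < length w" "w ! i \<in> K" "w ! Suc i \<in> F"
      by (auto simp: inversion_def)
    define u v where "u = take i w" and "v = drop (Suc (Suc i)) w"
    have w: "w = u @ w ! i # w ! Suc i # v" and "length u = i"
      using decompose_at_pair[OF i(1)] i(1) by (simp_all add: u_def v_def)
    moreover have "length u + length v + 2 = s"
      using i(1) \<open>length w = s\<close> by (simp add: u_def v_def)
    ultimately have "x w = lincomb (rule (w ! i) (w ! Suc i)) (\<lambda>a b. x (u @ a # b # v))"
      using \<open>?pairs\<close> i(2,3) by metis
    then show "x w = lincomb (rule (w ! i) (w ! Suc i)) (\<lambda>a b. x (replace_pair w i a b))"
      using replace_pair_middle[of u "w ! i" "w ! Suc i" v] w \<open>length u = i\<close> by simp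
  qed
next
  assume ?words
  show ?pairs
  proof (intro allI impI ballI)
    fix u v :: "letter list" and b a assume "length u + length v + 2 = s" "b \<in> K" "a \<in> F"
    then show "x (u @ b # a # v) = lincomb (rule b a) (\<lambda>a' b'. x (u @ a' # b' # v))"
      using \<open>?words\<close> inversion_middle[of b a u v] by (simp add: replace_pair_middle nth_append)
  qed
qed

lemma chen_integrable_hcomp_iff:
  "chen_integrable s (hcomp s x) \<longleftrightarrow> (\<forall>w i. length w = s \<longrightarrow> inversion w i \<longrightarrow>
     x w = lincomb (rule (w ! i) (w ! Suc i)) (\<lambda>a b. x (replace_pair w i a b)))"
proof -
  have "chen_integrable s (hcomp s x) \<longleftrightarrow> (\<forall>u v. length u + length v + 2 = s \<longrightarrow>
      (\<forall>z\<in>Ureg. chen_coeff (\<lambda>a b. x (u @ a # b # v)) z = 0))"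
    unfolding chen_integrable_iff_pairs by (simp add: hcomp_def)
  also have "\<dots> \<longleftrightarrow> (\<forall>u v. length u + length v + 2 = s \<longrightarrow>
      (\<forall>b\<in>K. \<forall>a\<in>F. x (u @ b # a # v) = lincomb (rule b a) (\<lambda>a' b'. x (u @ a' # b' # v))))"
    by (simp only: chen_iff_straightening)
  finally show ?thesis
    by (simp only: straightening_at_pairs_iff)
qed

lemma Bar_iff_satisfies_straightening:
  assumes "x \<in> S A"
  shows "x \<in> Bar \<longleftrightarrow> satisfies_straightening x"
proof -
  have "hcomp s x \<in> S A" for s
    using assms by (auto simp: S_def supp_def hcomp_def elim: rev_finite_subset)
  then have "x \<in> Bar \<longleftrightarrow> (\<forall>s. chen_integrable s (hcomp s x))"
    using assms by (auto simp: Bar_def Bs_def supp_def hcomp_def)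
  then show ?thesis
    by (auto simp: chen_integrable_hcomp_iff satisfies_straightening_def)
qed

lemma inversion_Cons_Suc: "inversion (a # w) (Suc i) \<longleftrightarrow> inversion w i"
  by (simp add: inversion_def)

lemma no_inversion_K_head:
  "set w \<subseteq> A \<Longrightarrow> \<forall>i. \<not> inversion (b # w) i \<Longrightarrow> b \<in> K \<Longrightarrow> set (b # w) \<subseteq> K"
proof (induction w arbitrary: b)
  case (Cons c w)
  then have "\<not> inversion (b # c # w) 0"
    by blast
  then have "c \<in> K"
    using Cons.prems A_split by (auto simp: inversion_def)
  moreover have "\<forall>i. \<not> inversion (c # w) i"
    using Cons.prems(2) inversion_Cons_Suc by blast
  ultimately show ?case
    using Cons by simp
qed simp

lemma no_inversion_imp_F_rest:
  "set w \<subseteq> A \<Longrightarrow> \<forall>i. \<not> inversion w i \<Longrightarrow> set (F_rest w) \<subseteq> K"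
proof (induction w)
  case (Cons c w)
  show ?case
  proof (cases "c \<in> F")
    case True
    moreover have "\<forall>i. \<not> inversion w i"
      using Cons.prems(2) inversion_Cons_Suc by blast
    ultimately show ?thesis
      using Cons by simp
  next
    case False
    then show ?thesis
      using Cons.prems A_split no_inversion_K_head[of w c] by auto
  qed
qed simp

lemma no_inversion_append:
  assumes "set U \<subseteq> F" "set V \<subseteq> K"
  shows "\<not> inversion (U @ V) i"
proof
  assume inv: "inversion (U @ V) i"
  show False
  proof (cases "i < length U")
    case True
    then have "(U @ V) ! i \<in> F"
      using assms(1) by (auto simp: nth_append)
    then show False using inv F_K_disjoint by (auto simp: inversion_def)
  next
    case False
    then have "(U @ V) ! Suc i \<in> K"
      using inv assms(2) by (auto simp: inversion_def nth_append)
    then show False using inv F_K_disjoint by (auto simp: inversion_def)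
  qed
qed

lemma Bar_eq_if_iota_eq:
  assumes "x \<in> Bar" "y \<in> Bar" "iota r K x = iota r K y"
  shows "x = y"
proof
  have straight: "satisfies_straightening x" "satisfies_straightening y"
    using assms(1,2) Bar_iff_satisfies_straightening by (auto simp: Bar_def)
  fix w
  show "x w = y w"
  proof (induction w rule: measure_induct_rule[of inversion_weight])
    case (less w)
    show ?case
    proof (cases "set w \<subseteq> A")
      case False
      then have "x w = 0" "y w = 0"
        using assms(1,2) by (auto simp: Bar_def S_def supp_def)
      then show ?thesis by simp
    next
      case True
      show ?thesis
      proof (cases "\<exists>i. inversion w i")
        case True
        then obtain i where i: "inversion w i" ..
        then have "w ! i \<in> K" "w ! Suc i \<in> F"
          by (auto simp: inversion_def)
        then have "lincomb (rule (w ! i) (w ! Suc i)) (\<lambda>a b. x (replace_pair w i a b)) =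
                   lincomb (rule (w ! i) (w ! Suc i)) (\<lambda>a b. y (replace_pair w i a b))"
          using less inversion_weight_decreases[OF i] rule_letters by (blast intro: lincomb_cong)
        then show ?thesis
          using straight i by (simp add: satisfies_straightening_def)
      next
        case False
        then have "set (F_rest w) \<subseteq> K"
          using no_inversion_imp_F_rest \<open>set w \<subseteq> A\<close> by blast
        then show ?thesis
          using iota_split_word assms finite_supp_Bar by metis
      qed
    qed
  qed
qed

function straighten :: "(letter list \<Rightarrow> rat) \<Rightarrow> letter list \<Rightarrow> rat" where
  "straighten base w = (if \<exists>i. inversion w i then
     (let i = LEAST i. inversion w i in
       lincomb (rule (w ! i) (w ! Suc i)) (\<lambda>a b. straighten base (replace_pair w i a b)))
   else base w)"
  by pat_completeness auto
termination
proof (relation "measure (\<lambda>(base, w). inversion_weight w)")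
  fix base w i q a b
  assume "\<exists>i. inversion w i" "i = (LEAST i. inversion w i)" "(q, a, b) \<in> set (rule (w ! i) (w ! Suc i))"
  then have "inversion w i" "(q, a, b) \<in> set (rule (w ! i) (w ! Suc i))"
    using LeastI_ex by blast+
  then have "inversion_weight (replace_pair w i a b) < inversion_weight w"
    using inversion_weight_decreases rule_letters by (meson inversion_def)
  then show "((base, replace_pair w i a b), (base, w)) \<in> measure (\<lambda>(base, w). inversion_weight w)"
    by simp
qed simp

declare straighten.simps [simp del]

lemma straighten_no_inversion: "\<not> (\<exists>i. inversion w i) \<Longrightarrow> straighten base w = base w"
  by (subst straighten.simps) (rule if_not_P)

lemma straighten_least_inversion:
  assumes "inversion w i" "i = (LEAST i. inversion w i)"
  shows "straighten base w = lincomb (rule (w ! i) (w ! Suc i)) (\<lambda>a b. straighten base (replace_pair w i a b))"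
  using assms by (subst straighten.simps) (auto simp: Let_def)

text \<open>The value does not depend on which inversion is resolved first: resolving two inversions
  at disjoint positions commutes, and the resulting double sums agree by exchanging summations.\<close>
lemma straighten_inversion:
  "inversion w j \<Longrightarrow>
    straighten base w = lincomb (rule (w ! j) (w ! Suc j)) (\<lambda>a b. straighten base (replace_pair w j a b))"
proof (induction w arbitrary: j rule: measure_induct_rule[of inversion_weight])
  case (less w)
  define i where "i = (LEAST i. inversion w i)"
  have "inversion w i" "i \<le> j"
    unfolding i_def using less.prems by (auto intro: LeastI Least_le)
  have least: "straighten base w = lincomb (rule (w ! i) (w ! Suc i)) (\<lambda>a b. straighten base (replace_pair w i a b))"
    using straighten_least_inversion[OF \<open>inversion w i\<close> i_def] .
  show ?case
  proof (cases "i = j")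
    case False
    have "j \<noteq> Suc i"
      using \<open>inversion w i\<close> less.prems F_K_disjoint by (auto simp: inversion_def)
    then have "Suc i < j"
      using \<open>i \<le> j\<close> False by simp
    let ?Ri = "rule (w ! i) (w ! Suc i)" and ?Rj = "rule (w ! j) (w ! Suc j)"
    have resolve_j: "straighten base (replace_pair w i a b) =
        lincomb ?Rj (\<lambda>c d. straighten base (replace_pair (replace_pair w i a b) j c d))"
      if "(q, a, b) \<in> set ?Ri" for q a b
    proof -
      have "a \<in> F"
        using rule_letters that \<open>inversion w i\<close> by (meson inversion_def)
      moreover have "replace_pair w i a b ! j = w ! j" "replace_pair w i a b ! Suc j = w ! Suc j"
        using \<open>Suc i < j\<close> less.prems by (auto simp: nth_replace_pair inversion_def)
      moreover have "inversion (replace_pair w i a b) j"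
        using inversion_replace_pair_disjoint[OF less.prems] \<open>Suc i < j\<close> by blast
      ultimately show ?thesis
        using less.IH[OF inversion_weight_decreases[OF \<open>inversion w i\<close> \<open>a \<in> F\<close>]] by simp
    qed
    have resolve_i: "lincomb ?Ri (\<lambda>a b. straighten base (replace_pair (replace_pair w i a b) j c d)) =
        straighten base (replace_pair w j c d)"
      if "(q, c, d) \<in> set ?Rj" for q c d
    proof -
      have "c \<in> F"
        using rule_letters that less.prems by (meson inversion_def)
      moreover have "replace_pair w j c d ! i = w ! i" "replace_pair w j c d ! Suc i = w ! Suc i"
        using \<open>Suc i < j\<close> less.prems by (auto simp: nth_replace_pair inversion_def)
      moreover have "inversion (replace_pair w j c d) i"
        using inversion_replace_pair_disjoint[OF \<open>inversion w i\<close>] \<open>Suc i < j\<close> by blast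
      ultimately show ?thesis
        using less.IH[OF inversion_weight_decreases[OF less.prems \<open>c \<in> F\<close>]]
        by (simp add: replace_pair_commute[OF \<open>Suc i < j\<close>])
    qed
    have "straighten base w = lincomb ?Ri (\<lambda>a b. lincomb ?Rj (\<lambda>c d.
        straighten base (replace_pair (replace_pair w i a b) j c d)))"
      unfolding least by (rule lincomb_cong[OF refl]) (rule resolve_j)
    also have "\<dots> = lincomb ?Rj (\<lambda>c d. lincomb ?Ri (\<lambda>a b.
        straighten base (replace_pair (replace_pair w i a b) j c d)))"
      by (rule lincomb_swap)
    also have "\<dots> = lincomb ?Rj (\<lambda>c d. straighten base (replace_pair w j c d))"
      by (rule lincomb_cong[OF refl]) (rule resolve_i)
    finally show ?thesis .
  qed (use least in simp)
qed

lemma satisfies_straightening_straighten: "satisfies_straightening (straighten base)"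
  unfolding satisfies_straightening_def using straighten_inversion by blast

lemma satisfies_straightening_restrict:
  assumes "satisfies_straightening x"
    and closed: "\<And>w i q a b. inversion w i \<Longrightarrow> (q, a, b) \<in> set (rule (w ! i) (w ! Suc i)) \<Longrightarrow>
      replace_pair w i a b \<in> W \<longleftrightarrow> w \<in> W"
  shows "satisfies_straightening (\<lambda>w. if w \<in> W then x w else 0)"
  unfolding satisfies_straightening_def
proof (intro allI impI)
  fix w i assume "inversion w i"
  let ?R = "rule (w ! i) (w ! Suc i)"
  have "lincomb ?R (\<lambda>a b. if replace_pair w i a b \<in> W then x (replace_pair w i a b) else 0)
      = (if w \<in> W then lincomb ?R (\<lambda>a b. x (replace_pair w i a b)) else lincomb ?R (\<lambda>_ _. 0))"
    using closed[OF \<open>inversion w i\<close>] by (cases "w \<in> W") (auto intro: lincomb_cong simp del: lincomb_zero)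
  then show "(if w \<in> W then x w else 0) =
      lincomb ?R (\<lambda>a b. if replace_pair w i a b \<in> W then x (replace_pair w i a b) else 0)"
    using assms(1) \<open>inversion w i\<close> by (simp add: satisfies_straightening_def)
qed

lemma replace_pair_in_A_iff:
  assumes "inversion w i" "(q, a, b) \<in> set (rule (w ! i) (w ! Suc i))"
  shows "set (replace_pair w i a b) \<subseteq> A \<longleftrightarrow> set w \<subseteq> A"
proof -
  have "Suc i < length w" "w ! i \<in> K" "w ! Suc i \<in> F"
    using assms(1) by (auto simp: inversion_def)
  moreover from this have "a \<in> F" "b \<in> A"
    using rule_letters assms(2) by blast+
  ultimately show ?thesis
    using set_replace_pair_subset_iff[of i w A a b] A_split by blast
qed

lemma iota_surj:
  assumes "Y \<in> T B1 K"
  shows "\<exists>x\<in>Bar. iota r K x = Y"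
proof -
  define Ls where "Ls = (\<lambda>p. length (fst p) + length (snd p)) ` supp Y"
  define W where "W = (\<Union>n\<in>Ls. {w. set w \<subseteq> A \<and> length w = n})"
  define x where "x w = (if w \<in> W then straighten (\<lambda>w. Y (split_word w)) w else 0)" for w
  have "finite (supp Y)" and Y_alphabets: "\<And>p. p \<in> supp Y \<Longrightarrow> set (fst p) \<subseteq> B1 \<and> set (snd p) \<subseteq> K"
    using assms by (auto simp: T_def)
  then have "finite W"
    unfolding W_def Ls_def by (auto simp: A_def intro: finite_lists_length_eq)
  moreover have "supp x \<subseteq> W"
    by (auto simp: supp_def x_def)
  ultimately have "finite (supp x)" and "x \<in> S A"
    by (auto simp: S_def W_def intro: finite_subset)
  moreover have "satisfies_straightening x"
    unfolding x_def using satisfies_straightening_straighten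
    by (rule satisfies_straightening_restrict) (simp add: W_def replace_pair_in_A_iff)
  ultimately have "x \<in> Bar"
    using Bar_iff_satisfies_straightening by blast
  have "iota r K x (u, v) = Y (u, v)" for u v
  proof (cases "set u \<subseteq> B1 \<and> set v \<subseteq> K")
    case True
    then have "set (lift_word u) \<subseteq> F"
      using lift_word_in_F by blast
    then have "\<not> (\<exists>i. inversion (lift_word u @ v) i)" "set (lift_word u @ v) \<subseteq> A"
      using no_inversion_append True A_split by auto
    then show ?thesis
      using True Y_alphabets \<open>finite (supp x)\<close>
      by (auto simp: iota_apply x_def W_def Ls_def supp_def straighten_no_inversion split_word_lift_append)
  next
    case False
    then have "Y (u, v) = 0"
      using Y_alphabets[of "(u, v)"] by (auto simp: supp_def)
    then show ?thesis
      by (simp only: iota_apply[OF \<open>finite (supp x)\<close>] if_not_P[OF False])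
  qed
  then have "iota r K x = Y"
    by (intro ext) (metis surj_pair)
  with \<open>x \<in> Bar\<close> show ?thesis by blast
qed

theorem shuffle_alg_iso_iota: "shuffle_alg_iso (iota r K) B1 K"
  unfolding shuffle_alg_iso_def
proof (intro conjI ballI allI)
  have "inj_on (iota r K) Bar"
    by (rule inj_onI) (rule Bar_eq_if_iota_eq)
  moreover have "iota r K ` Bar = T B1 K"
    using iota_in_T[OF finite_supp_Bar] iota_surj by blast
  ultimately show "bij_betw (iota r K) Bar (T B1 K)"
    unfolding bij_betw_def ..
  show "iota r K (shuffle x y) = tshuffle (iota r K x) (iota r K y)" if "x \<in> Bar" "y \<in> Bar" for x y
  proof -
    have "x \<in> S A" "y \<in> S A"
      using that by (simp_all add: Bar_def)
    then have "shuffle x y \<in> S A"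
      by (intro shuffle_in_S) (simp add: A_def)
    then show ?thesis
      using iota_shuffle that finite_supp_Bar by (simp add: S_def)
  qed
  show "iota r K (\<lambda>w. x w + y w) = (\<lambda>p. iota r K x p + iota r K y p)" if "x \<in> Bar" "y \<in> Bar" for x y
    using that by (simp add: iota_add finite_supp_Bar)
  show "iota r K (\<lambda>w. c * x w) = (\<lambda>p. c * iota r K x p)" if "x \<in> Bar" for c x
    using that by (simp add: iota_scale finite_supp_Bar)
qed (rule iota_unit_word)

end

section \<open>The two restrictions\<close>

text \<open>The relations solve the equations of \<open>chen_coeff_vanishes_iff\<close> for the
  coefficients \<open>c b a\<close> with \<open>b\<close> in the second alphabet.\<close>
fun rule12 :: "letter \<Rightarrow> letter \<Rightarrow> (rat \<times> letter \<times> letter) list" where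
  "rule12 Z2 Z1 = [(1, Z1, Z2)]"
| "rule12 Z22 Z1 = [(1, Z1, Z22)]"
| "rule12 Z2 Z11 = [(1, Z11, Z2)]"
| "rule12 Z22 Z11 = [(1, Z11, Z22), (1, Z11, Z12), (-1, Z12, Z11)]"
| "rule12 Z22 Z12 = [(1, Z12, Z22), (-1, Z11, Z12), (1, Z12, Z11)]"
| "rule12 Z2 Z12 = [(1, Z1, Z12), (-1, Z12, Z1), (1, Z12, Z2), (-1, Z11, Z12), (1, Z12, Z11)]"
| "rule12 _ _ = []"

fun rule21 :: "letter \<Rightarrow> letter \<Rightarrow> (rat \<times> letter \<times> letter) list" where
  "rule21 Z1 Z2 = [(1, Z2, Z1)]"
| "rule21 Z11 Z2 = [(1, Z2, Z11)]"
| "rule21 Z1 Z22 = [(1, Z22, Z1)]"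
| "rule21 Z11 Z22 = [(1, Z22, Z11), (1, Z22, Z12), (-1, Z12, Z22)]"
| "rule21 Z11 Z12 = [(1, Z12, Z11), (-1, Z22, Z12), (1, Z12, Z22)]"
| "rule21 Z1 Z12 = [(1, Z2, Z12), (-1, Z12, Z2), (1, Z12, Z1), (-1, Z22, Z12), (1, Z12, Z22)]"
| "rule21 _ _ = []"

lemma straightening_law_12: "straightening_law restr12 {Z1, Z11, Z12} A2_12 A1_12 rule12"
proof
  fix c :: "letter \<Rightarrow> letter \<Rightarrow> rat"
  show "(\<forall>z\<in>Ureg. chen_coeff c z = 0) \<longleftrightarrow> (\<forall>b\<in>A2_12. \<forall>a\<in>{Z1, Z11, Z12}. c b a = lincomb (rule12 b a) c)"
    unfolding chen_coeff_vanishes_iff by (simp add: A2_12_def skew_def) linarith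
qed (auto simp: A_def A1_12_def A2_12_def elim: restr12.elims)

lemma straightening_law_21: "straightening_law restr21 {Z2, Z22, Z12} A1_21 A2_21 rule21"
proof
  fix c :: "letter \<Rightarrow> letter \<Rightarrow> rat"
  show "(\<forall>z\<in>Ureg. chen_coeff c z = 0) \<longleftrightarrow> (\<forall>b\<in>A1_21. \<forall>a\<in>{Z2, Z22, Z12}. c b a = lincomb (rule21 b a) c)"
    unfolding chen_coeff_vanishes_iff by (simp add: A1_21_def skew_def) linarith
qed (auto simp: A_def A1_21_def A2_21_def elim: restr21.elims)

theorem proposition5p7:
  shows "shuffle_alg_iso iota12 A1_12 A2_12 \<and> shuffle_alg_iso iota21 A2_21 A1_21"
  unfolding iota12_def iota21_def
  using straightening_law.shuffle_alg_iso_iota[OF straightening_law_12]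
    straightening_law.shuffle_alg_iso_iota[OF straightening_law_21] by blast

end
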